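(* Assume the standing hypotheses (H). Let $Z_3$ be a set of exactly $\lfloor 2k_3/3\rfloor$ parts of size $3$ and $Z_4$ a set of exactly $\max\{0,\frac{k_1-k_3+k_4+1}{3}\}$ parts of size $4$ (under (H) this number is a nonnegative integer at most $k_4$). Let $M$ be a merging of $G$, with $t_3$ the number of parts of size $3$ containing a pair of $M$, satisfying: (P1) $t_3\ge k_3/3$; (P2) every part of size $4$ contains at least one pair of $M$; (P3) for every part $A$ and distinct $x,y,z\in A^*$: $|L(x)\cup L(y)\cup L(z)|\ge n-t_3-k_4$; (P4) for every part $A$ of size $3$ containing no pair of $M$ and all $x,y\in A^*$ with $x\neq y$: $|L(x)\cup L(y)|\ge k+k_3+k_4$; (P5) for every $A\in Z_3$ and distinct $x,y\in A^*$: $|L(x)\cup L(y)|\ge k+t_3+k_4$; (P6) for every part $A$ of size $3$ and distinct $x,y\in A^*$: $|L(x)\cup L(y)|\ge k+\frac{k_3}{3}+k_4$; (P7) for every $A\in Z_4$ and distinct $x,y\in A^*$: $|L(x)\cup L(y)|\ge k+k_4$; (P8) the family $(L(w))_{w}$ indexed by the merged vertices $w$ has a system of distinct representatives. Then the family $(L(x))_{x\in V^*}$ of all lists after merging has a system of distinct representatives (and hence $G$ has an $L$-coloring).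
   Context: A list assignment $L$ assigns to each vertex $v$ a set $L(v)$ of colors; an $L$-coloring is a proper coloring $f$ with $f(v)\in L(v)$ for all $v$; $\mathrm{ch}$ denotes choice number and $\chi$ chromatic number. A part of a complete multipartite graph is one of its maximal stable sets. Standing hypotheses (H): $k\ge1$ and $n\ge 2k+2$ are integers; $G$ is a complete $k$-partite graph (exactly $k$ nonempty parts) on $n$ vertices; $L$ is a list assignment for $G$ with $|L(v)|\ge\lceil (n+k-1)/3\rceil$ for every vertex $v$; $G$ has no $L$-coloring; $\left|\bigcup_{v\in V(G)}L(v)\right|\le n-1$; and every graph $H$ with fewer than $n$ vertices satisfies $\mathrm{ch}(H)\le\max\{\chi(H),\lceil(|V(H)|+\chi(H)-1)/3\rceil\}$. For $i\in\{1,2,3,4\}$, $k_i$ denotes the number of parts of $G$ of size $i$. A merging $M$ of $G$ is a collection of pairwise disjoint $2$-element sets of vertices, each contained in a single part. Merging replaces each pair $\{u,v\}\in M$ by a single new (merged) vertex $w$ with list $L(w)=L(u)\cap L(v)$; vertices in no pair of $M$ remain (unmerged) with their original lists. $V^*$ is the resulting vertex set, and for a part $A$, $A^*$ is the set of vertices of $V^*$ arising from $A$ (merged vertices from pairs in $A$ together with unmerged vertices of $A$). A system of distinct representatives (SDR) of a family $(X_i)_{i\in I}$ of sets is a choice of elements $x_i\in X_i$ that are pairwise distinct. *)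

theory Defs
  imports Complex_Main "HOL-Library.Disjoint_Sets"
begin

definition simple_graph :: "'v set \<Rightarrow> ('v \<Rightarrow> 'v \<Rightarrow> bool) \<Rightarrow> bool" where
  "simple_graph V E \<longleftrightarrow> finite V \<and> (\<forall>u v. E u v \<longrightarrow> u \<in> V \<and> v \<in> V \<and> u \<noteq> v)
     \<and> (\<forall>u v. E u v \<longrightarrow> E v u)"

definition proper_coloring :: "'v set \<Rightarrow> ('v \<Rightarrow> 'v \<Rightarrow> bool) \<Rightarrow> ('v \<Rightarrow> 'c) \<Rightarrow> bool" where
  "proper_coloring V E f \<longleftrightarrow> (\<forall>u\<in>V. \<forall>v\<in>V. E u v \<longrightarrow> f u \<noteq> f v)"

definition L_coloring :: "'v set \<Rightarrow> ('v \<Rightarrow> 'v \<Rightarrow> bool) \<Rightarrow> ('v \<Rightarrow> 'c set) \<Rightarrow> ('v \<Rightarrow> 'c) \<Rightarrow> bool" where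
  "L_coloring V E L f \<longleftrightarrow> proper_coloring V E f \<and> (\<forall>v\<in>V. f v \<in> L v)"

definition chromatic_number :: "'v set \<Rightarrow> ('v \<Rightarrow> 'v \<Rightarrow> bool) \<Rightarrow> nat" where
  "chromatic_number V E =
     (LEAST k. \<exists>f :: 'v \<Rightarrow> nat. proper_coloring V E f \<and> f ` V \<subseteq> {..<k})"

text \<open>k-choosable: every assignment of lists of size at least k admits an L-coloring
  (colors are natural numbers; lists are finite, so this is no loss of generality).\<close>
definition choosable :: "'v set \<Rightarrow> ('v \<Rightarrow> 'v \<Rightarrow> bool) \<Rightarrow> nat \<Rightarrow> bool" where
  "choosable V E k \<longleftrightarrow>
     (\<forall>L :: 'v \<Rightarrow> nat set. (\<forall>v\<in>V. card (L v) \<ge> k) \<longrightarrow> (\<exists>f. L_coloring V E L f))"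

definition choice_number :: "'v set \<Rightarrow> ('v \<Rightarrow> 'v \<Rightarrow> bool) \<Rightarrow> nat" where
  "choice_number V E = (LEAST k. choosable V E k)"

definition complete_multipartite ::
  "'v set \<Rightarrow> ('v \<Rightarrow> 'v \<Rightarrow> bool) \<Rightarrow> 'v set set \<Rightarrow> bool" where
  "complete_multipartite V E P \<longleftrightarrow>
     finite V \<and> partition_on V P \<and>
     (\<forall>u v. E u v \<longleftrightarrow> (u \<in> V \<and> v \<in> V \<and> \<not> (\<exists>A\<in>P. u \<in> A \<and> v \<in> A)))"

definition num_parts :: "'v set set \<Rightarrow> nat \<Rightarrow> nat" where
  "num_parts P i = card {A \<in> P. card A = i}"

definition merging :: "'v set set \<Rightarrow> 'v set set \<Rightarrow> bool" where
  "merging P M \<longleftrightarrow>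
     (\<forall>p\<in>M. card p = 2 \<and> (\<exists>A\<in>P. p \<subseteq> A)) \<and>
     (\<forall>p\<in>M. \<forall>q\<in>M. p \<noteq> q \<longrightarrow> p \<inter> q = {})"

text \<open>Vertices after merging: a merged vertex is represented by its pair,
  an unmerged vertex v by the singleton {v}.\<close>
definition merged_vertices :: "'v set \<Rightarrow> 'v set set \<Rightarrow> 'v set set" where
  "merged_vertices V M = M \<union> {{v} | v. v \<in> V \<and> v \<notin> \<Union>M}"

definition merged_list :: "('v \<Rightarrow> 'c set) \<Rightarrow> 'v set \<Rightarrow> 'c set" where
  "merged_list L x = (\<Inter>v\<in>x. L v)"

definition part_star :: "'v set \<Rightarrow> 'v set set \<Rightarrow> 'v set \<Rightarrow> 'v set set" where
  "part_star V M A = {x \<in> merged_vertices V M. x \<subseteq> A}"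

definition has_SDR :: "'i set \<Rightarrow> ('i \<Rightarrow> 'c set) \<Rightarrow> bool" where
  "has_SDR I X \<longleftrightarrow> (\<exists>f. inj_on f I \<and> (\<forall>i\<in>I. f i \<in> X i))"

end

theory Submission
  imports Defs
begin

(* By Hall's theorem it suffices that |J| <= |U{L(x) | x in J}| for every set J of vertices of V^*.
   If J contains three vertices of one A^*, this follows from (P3), since
   |J| <= |V^*| = n - |M| <= n - t_3 - k_4; if J consists of merged vertices, it follows from (P8).
   Otherwise J meets every A^* at most twice, so |J| <= k + |D| for the set D of parts met twice,
   and the lists of a pair of J in a suitable part of D have at least k + |D| colours by (P4)-(P7).
   If D contains a part of size 2, the pair consists of two vertices of G with disjoint lists; if all
   parts of D have size 4 and lie outside Z_4, the list of one unmerged vertex of J is already long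
   enough. Besides these hypotheses only two properties of the minimal counterexample G are used:
   no colour lies in the lists of three vertices of a part, or of both vertices of a part of size 2
   (colour them alike and the rest of G by minimality), and hence every part has at most four
   vertices. *)

section \<open>Hall's theorem\<close>

lemma has_SDR_Un:
  assumes "has_SDR I X" "has_SDR J Y" "I \<inter> J = {}" "(\<Union>i\<in>I. X i) \<inter> (\<Union>j\<in>J. Y j) = {}"
    and "\<And>i. i \<in> I \<Longrightarrow> X i \<subseteq> Z i" "\<And>j. j \<in> J \<Longrightarrow> Y j \<subseteq> Z j"
  shows "has_SDR (I \<union> J) Z"
proof -
  obtain f g where f: "inj_on f I" "\<forall>i\<in>I. f i \<in> X i" and g: "inj_on g J" "\<forall>j\<in>J. g j \<in> Y j"
    using assms(1,2) unfolding has_SDR_def by blast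
  define h where "h i = (if i \<in> I then f i else g i)" for i
  have "inj_on h I" using f(1) by (simp add: h_def inj_on_def)
  moreover have "inj_on h J" using g(1) assms(3) by (auto simp: h_def inj_on_def)
  moreover have "h ` I \<inter> h ` J = {}"
  proof -
    have "h ` I \<subseteq> (\<Union>i\<in>I. X i)" using f(2) by (auto simp: h_def)
    moreover have "h ` J \<subseteq> (\<Union>j\<in>J. Y j)" using g(2) assms(3) by (auto simp: h_def)
    ultimately show ?thesis using assms(4) by blast
  qed
  moreover have "I - J = I" "J - I = J" using assms(3) by blast+
  ultimately have "inj_on h (I \<union> J)" by (simp add: inj_on_Un)
  moreover have "\<forall>i\<in>I \<union> J. h i \<in> Z i" using f(2) g(2) assms(5,6) by (auto simp: h_def subset_iff)
  ultimately show ?thesis unfolding has_SDR_def by blast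
qed

lemma Hall_condition_Diff_critical:
  assumes fin: "finite I" and Hall: "\<And>K. K \<subseteq> I \<Longrightarrow> card K \<le> card (\<Union>(X ` K))"
    and J: "J \<subseteq> I" "card (\<Union>(X ` J)) = card J" and K: "K \<subseteq> I - J"
  shows "card K \<le> card (\<Union>((\<lambda>i. X i - \<Union>(X ` J)) ` K))"
proof -
  let ?U = "\<Union>(X ` J)"
  have "card K + card J = card (K \<union> J)"
    using K J(1) fin by (subst card_Un_disjoint) (auto intro: finite_subset)
  also have "\<dots> \<le> card (\<Union>(X ` (K \<union> J)))" using K J(1) by (intro Hall) auto
  also have "\<Union>(X ` (K \<union> J)) = \<Union>((\<lambda>i. X i - ?U) ` K) \<union> ?U" by auto
  also have "card \<dots> \<le> card (\<Union>((\<lambda>i. X i - ?U) ` K)) + card J" using card_Un_le J(2) by metis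
  finally show ?thesis by simp
qed

lemma Hall_condition_Diff_element:
  assumes surplus: "\<And>K. K \<subseteq> I \<Longrightarrow> K \<noteq> {} \<Longrightarrow> K \<noteq> I \<Longrightarrow> card K < card (\<Union>(X ` K))"
    and i0: "i0 \<in> I" and K: "K \<subseteq> I - {i0}"
  shows "card K \<le> card (\<Union>((\<lambda>i. X i - {x}) ` K))"
proof (cases "K = {}")
  case False
  have "card K < card (\<Union>(X ` K))" using K i0 False by (intro surplus) auto
  moreover have "\<Union>((\<lambda>i. X i - {x}) ` K) = \<Union>(X ` K) - {x}" by auto
  ultimately show ?thesis by (auto simp: card_Diff_singleton_if)
qed simp

text \<open>Halmos--Vaughan induction: a critical proper subfamily and the rest, with the colours of the
  former removed, are matched separately; if there is none, any single element can be matched first.\<close>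
theorem Hall_has_SDR:
  fixes X :: "'i \<Rightarrow> 'c set"
  assumes "finite I" "\<And>i. i \<in> I \<Longrightarrow> finite (X i)" "\<And>J. J \<subseteq> I \<Longrightarrow> card J \<le> card (\<Union>(X ` J))"
  shows "has_SDR I X"
  using assms
proof (induction "card I" arbitrary: I X rule: less_induct)
  case less
  consider (empty) "I = {}"
    | (critical) J where "J \<subseteq> I" "J \<noteq> {}" "J \<noteq> I" "card (\<Union>(X ` J)) = card J"
    | (surplus) "I \<noteq> {}" "\<And>J. J \<subseteq> I \<Longrightarrow> J \<noteq> {} \<Longrightarrow> J \<noteq> I \<Longrightarrow> card J < card (\<Union>(X ` J))"
    using less.prems(3) by (metis nat_less_le)
  then show ?case
  proof cases
    case empty
    then show ?thesis unfolding has_SDR_def by simp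
  next
    case critical
    define U where "U = \<Union>(X ` J)"
    have fin_J: "finite J" using critical(1) less.prems(1) finite_subset by blast
    have "has_SDR J X"
    proof (rule less.hyps)
      show "card J < card I" using critical(1,3) less.prems(1) by (meson psubsetI psubset_card_mono)
    qed (use critical(1) fin_J less.prems in auto)
    moreover have "has_SDR (I - J) (\<lambda>i. X i - U)"
    proof (rule less.hyps)
      show "card (I - J) < card I"
        using critical(1,2) less.prems(1) by (intro psubset_card_mono) auto
      show "card K \<le> card (\<Union>((\<lambda>i. X i - U) ` K))" if "K \<subseteq> I - J" for K
        unfolding U_def using less.prems(1,3) critical(1,4) that by (rule Hall_condition_Diff_critical)
    qed (use less.prems(1,2) in auto)
    ultimately have "has_SDR (J \<union> (I - J)) X" by (rule has_SDR_Un) (auto simp: U_def)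
    moreover have "J \<union> (I - J) = I" using critical(1) by blast
    ultimately show ?thesis by simp
  next
    case surplus
    then obtain i0 where i0: "i0 \<in> I" by blast
    have "card {i0} \<le> card (X i0)" using less.prems(3)[of "{i0}"] i0 by simp
    then obtain x where x: "x \<in> X i0" by fastforce
    have "has_SDR {i0} (\<lambda>_. {x})" unfolding has_SDR_def by (rule exI[of _ "\<lambda>_. x"]) simp
    moreover have "has_SDR (I - {i0}) (\<lambda>i. X i - {x})"
    proof (rule less.hyps)
      show "card (I - {i0}) < card I" using less.prems(1) i0 by (rule card_Diff1_less)
      show "card K \<le> card (\<Union>((\<lambda>i. X i - {x}) ` K))" if "K \<subseteq> I - {i0}" for K
        using surplus(2) i0 that by (rule Hall_condition_Diff_element)
    qed (use less.prems(1,2) in auto)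
    ultimately have "has_SDR ({i0} \<union> (I - {i0})) X" by (rule has_SDR_Un) (use x in auto)
    moreover have "{i0} \<union> (I - {i0}) = I" using i0 by blast
    ultimately show ?thesis by simp
  qed
qed

lemma card_le_card_Un: "finite X \<Longrightarrow> finite Y \<Longrightarrow> D \<subseteq> X \<union> Y \<Longrightarrow> card D \<le> card X + card Y"
  by (meson card_Un_le card_mono finite_UnI order_trans)

lemma three_subset:
  assumes "3 \<le> card X"
  obtains x y z where "{x, y, z} \<subseteq> X" "x \<noteq> y" "x \<noteq> z" "y \<noteq> z"
proof -
  obtain S where S: "S \<subseteq> X" "card S = 3" using obtain_subset_with_card_n[OF assms] by blast
  from S(2) obtain x y z where "S = {x, y, z}" "x \<noteq> y" "y \<noteq> z" "x \<noteq> z"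
    unfolding card_3_iff by blast
  then show thesis using that S(1) by blast
qed

section \<open>Choosability and copies of graphs on the natural numbers\<close>

lemma choosable_mono: "choosable W F a \<Longrightarrow> a \<le> b \<Longrightarrow> choosable W F b"
  unfolding choosable_def by (meson order_trans)

lemma choosable_card:
  assumes "simple_graph W F"
  shows "choosable W F (card W)"
  unfolding choosable_def
proof (intro allI impI)
  fix L :: "'a \<Rightarrow> nat set"
  assume L: "\<forall>v\<in>W. card W \<le> card (L v)"
  have fin_W: "finite W" using assms unfolding simple_graph_def by blast
  have "has_SDR W L"
  proof (rule Hall_has_SDR[OF fin_W])
    show "finite (L v)" if "v \<in> W" for v
      using that L fin_W card_gt_0_iff[of W] card_gt_0_iff[of "L v"] by fastforce
    show "card J \<le> card (\<Union>(L ` J))" if "J \<subseteq> W" for J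
    proof (cases "J = {}")
      case False
      then obtain v where v: "v \<in> J" by blast
      have "card J \<le> card W" using that fin_W by (rule card_mono[rotated])
      also have "\<dots> \<le> card (L v)" using L v that by blast
      also have "\<dots> \<le> card (\<Union>(L ` J))"
        using v that fin_W \<open>\<And>v. v \<in> W \<Longrightarrow> finite (L v)\<close>
        by (intro card_mono) (auto intro: finite_subset)
      finally show ?thesis .
    qed simp
  qed
  then obtain f where f: "inj_on f W" "\<forall>v\<in>W. f v \<in> L v" unfolding has_SDR_def by blast
  have "proper_coloring W F f"
    using assms f(1) unfolding proper_coloring_def simple_graph_def inj_on_def by blast
  then show "\<exists>f. L_coloring W F L f" using f(2) unfolding L_coloring_def by blast
qed

lemma choosable_choice_number:
  "simple_graph W F \<Longrightarrow> choosable W F (choice_number W F)"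
  unfolding choice_number_def by (rule LeastI, rule choosable_card)

definition image_edges :: "('v \<Rightarrow> nat) \<Rightarrow> 'v set \<Rightarrow> ('v \<Rightarrow> 'v \<Rightarrow> bool) \<Rightarrow> nat \<Rightarrow> nat \<Rightarrow> bool" where
  "image_edges g V' E i j \<longleftrightarrow> (\<exists>u\<in>V'. \<exists>v\<in>V'. i = g u \<and> j = g v \<and> E u v)"

lemma image_edges_iff:
  "inj_on g V' \<Longrightarrow> u \<in> V' \<Longrightarrow> v \<in> V' \<Longrightarrow> image_edges g V' E (g u) (g v) \<longleftrightarrow> E u v"
  unfolding image_edges_def inj_on_def by blast

lemma simple_graph_image_edges:
  assumes "finite V'" "inj_on g V'" "\<And>u v. E u v \<Longrightarrow> u \<noteq> v" "\<And>u v. E u v \<Longrightarrow> E v u"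
  shows "simple_graph (g ` V') (image_edges g V' E)"
  using assms unfolding simple_graph_def image_edges_def inj_on_def by blast

lemma chromatic_number_image_edges_le:
  assumes "inj_on g V'" and c: "\<And>u v. u \<in> V' \<Longrightarrow> v \<in> V' \<Longrightarrow> E u v \<Longrightarrow> c u \<noteq> c v"
    and "c ` V' \<subseteq> {..<q}"
  shows "chromatic_number (g ` V') (image_edges g V' E) \<le> q"
  unfolding chromatic_number_def
proof (rule Least_le, intro exI conjI)
  let ?h = "c \<circ> inv_into V' g"
  show "proper_coloring (g ` V') (image_edges g V' E) ?h"
    using assms(1) c unfolding proper_coloring_def image_edges_def by (auto dest: inj_onD)
  show "?h ` g ` V' \<subseteq> {..<q}" using assms(1,3) by auto
qed

text \<open>choosable only speaks about lists of natural numbers; this transfers it from a copy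
  of the graph to lists over any type with finite union.\<close>
lemma choosable_image_edges_imp_L_coloring:
  fixes g :: "'v \<Rightarrow> nat" and L :: "'v \<Rightarrow> 'c set"
  assumes ch: "choosable (g ` V') (image_edges g V' E) r" and g: "inj_on g V'"
    and L: "\<And>v. v \<in> V' \<Longrightarrow> r \<le> card (L v)" and fin: "finite (\<Union>v\<in>V'. L v)"
  shows "\<exists>f. L_coloring V' E L f"
proof -
  define C where "C = (\<Union>v\<in>V'. L v)"
  obtain enc :: "'c \<Rightarrow> nat" where enc: "inj_on enc C"
    using finite_imp_inj_to_nat_seg[OF fin] unfolding C_def by blast
  define L' where "L' i = enc ` L (inv_into V' g i)" for i
  have L'_g: "L' (g v) = enc ` L v" if "v \<in> V'" for v
    using that g by (simp add: L'_def)
  have "\<forall>i\<in>g ` V'. r \<le> card (L' i)"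
  proof
    fix i assume "i \<in> g ` V'"
    then obtain v where v: "v \<in> V'" "i = g v" by blast
    have "inj_on enc (L v)" using enc v by (auto simp: C_def intro: inj_on_subset)
    then show "r \<le> card (L' i)" using L v L'_g by (simp add: card_image)
  qed
  then obtain f' where f': "L_coloring (g ` V') (image_edges g V' E) L' f'"
    using ch unfolding choosable_def by blast
  define f where "f v = inv_into C enc (f' (g v))" for v
  have f'_g: "f' (g v) = enc (f v) \<and> f v \<in> L v" if "v \<in> V'" for v
  proof -
    have "f' (g v) \<in> enc ` L v" using f' that L'_g unfolding L_coloring_def by force
    then obtain y where "y \<in> L v" "f' (g v) = enc y" by blast
    moreover have "y \<in> C" using \<open>y \<in> L v\<close> that by (auto simp: C_def)
    ultimately show ?thesis using enc by (simp add: f_def)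
  qed
  have "proper_coloring V' E f"
    unfolding proper_coloring_def
  proof (intro ballI impI)
    fix u v assume uv: "u \<in> V'" "v \<in> V'" "E u v"
    then have "f' (g u) \<noteq> f' (g v)"
      using f' g image_edges_iff[OF g] unfolding L_coloring_def proper_coloring_def by blast
    then show "f u \<noteq> f v" using f'_g uv by metis
  qed
  then show ?thesis using f'_g unfolding L_coloring_def by blast
qed

lemma L_coloring_extend:
  assumes f: "L_coloring (V - T) E (\<lambda>v. L v - {c}) f"
    and T_indep: "\<And>u v. u \<in> T \<Longrightarrow> v \<in> T \<Longrightarrow> \<not> E u v" and c: "\<And>v. v \<in> T \<Longrightarrow> c \<in> L v"
  shows "L_coloring V E L (\<lambda>v. if v \<in> T then c else f v)"
  using assms unfolding L_coloring_def proper_coloring_def by (auto simp: Diff_iff)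

section \<open>Partitions and mergings\<close>

locale finite_partition =
  fixes V :: "'v set" and P :: "'v set set"
  assumes finite_V: "finite V" and partition: "partition_on V P"
begin

lemma Union_parts: "\<Union>P = V"
  using partition by (rule partition_onD1[symmetric])

lemma parts_disjoint: "A \<in> P \<Longrightarrow> B \<in> P \<Longrightarrow> A \<noteq> B \<Longrightarrow> A \<inter> B = {}"
  using partition by (meson disjointD partition_onD2)

lemma part_nonempty: "A \<in> P \<Longrightarrow> A \<noteq> {}"
  using partition partition_onD3 by blast

lemma part_subset: "A \<in> P \<Longrightarrow> A \<subseteq> V"
  using Union_parts by blast

lemma finite_P: "finite P"
  using finite_V partition by (rule finite_elements)

lemma finite_part: "A \<in> P \<Longrightarrow> finite A"
  using finite_V part_subset finite_subset by blast

lemma card_part_pos: "A \<in> P \<Longrightarrow> 1 \<le> card A"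
  using finite_part part_nonempty by (simp add: Suc_le_eq card_gt_0_iff)

lemma part_unique: "A \<in> P \<Longrightarrow> B \<in> P \<Longrightarrow> v \<in> A \<Longrightarrow> v \<in> B \<Longrightarrow> A = B"
  using parts_disjoint by blast

definition part_of :: "'v \<Rightarrow> 'v set" where
  "part_of v = (THE A. A \<in> P \<and> v \<in> A)"

lemma part_of: "v \<in> V \<Longrightarrow> part_of v \<in> P \<and> v \<in> part_of v"
proof -
  assume "v \<in> V"
  then have "\<exists>!A. A \<in> P \<and> v \<in> A" using Union_parts part_unique by blast
  then show ?thesis unfolding part_of_def by (rule theI')
qed

lemma card_V_eq_sum: "card V = (\<Sum>A\<in>P. card A)"
proof -
  have "card (\<Union>P) = sum card P"
    using parts_disjoint finite_part by (intro card_Union_disjoint) (auto simp: pairwise_def disjnt_def)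
  then show ?thesis by (simp add: Union_parts)
qed

lemma card_V_le: "(\<And>A. A \<in> P \<Longrightarrow> card A \<le> b) \<Longrightarrow> card V \<le> b * card P"
  using sum_bounded_above[of P card b] by (simp add: card_V_eq_sum mult.commute)

lemma sum_indicator_num_parts: "(\<Sum>A\<in>P. if card A = i then 1 else 0) = num_parts P i"
  using finite_P by (simp add: num_parts_def sum.If_cases Int_def)

lemma card_V_lower_bound: "2 * card P + num_parts P 3 + 2 * num_parts P 4 \<le> card V + num_parts P 1"
proof -
  let ?w = "\<lambda>A. (2::nat) + (if card A = 3 then 1 else 0) + 2 * (if card A = 4 then 1 else 0)"
  have "?w A \<le> card A + (if card A = 1 then 1 else 0)" if "A \<in> P" for A
    using card_part_pos[OF that] by (cases "card A = 2") auto
  then have "(\<Sum>A\<in>P. ?w A) \<le> (\<Sum>A\<in>P. card A + (if card A = 1 then 1 else 0))"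
    by (rule sum_mono)
  moreover have "(\<Sum>A\<in>P. ?w A) = (\<Sum>A\<in>P. 2) + (\<Sum>A\<in>P. if card A = 3 then 1 else 0)
      + 2 * (\<Sum>A\<in>P. if card A = 4 then 1 else 0)"
    by (simp only: sum.distrib sum_distrib_left)
  moreover have "(\<Sum>A\<in>P. card A + (if card A = 1 then 1 else (0::nat)))
      = card V + (\<Sum>A\<in>P. if card A = 1 then 1 else 0)"
    by (simp only: sum.distrib card_V_eq_sum)
  ultimately show ?thesis by (simp add: sum_indicator_num_parts)
qed

end

locale merged_partition = finite_partition V P for V :: "'v set" and P +
  fixes M :: "'v set set"
  assumes merging: "merging P M"
begin

abbreviation Vstar where "Vstar \<equiv> merged_vertices V M"
abbreviation star where "star A \<equiv> part_star V M A"

lemma pair_card: "p \<in> M \<Longrightarrow> card p = 2"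
  using merging unfolding merging_def by blast

lemma pair_in_part: "p \<in> M \<Longrightarrow> \<exists>A\<in>P. p \<subseteq> A"
  using merging unfolding merging_def by blast

lemma pairs_disjoint: "p \<in> M \<Longrightarrow> q \<in> M \<Longrightarrow> p \<noteq> q \<Longrightarrow> p \<inter> q = {}"
  using merging unfolding merging_def by blast

lemma pair_subset: "p \<in> M \<Longrightarrow> p \<subseteq> V"
  using pair_in_part part_subset by blast

lemma finite_M: "finite M"
  using finite_V pair_subset by (meson Pow_iff finite_Pow_iff finite_subset subsetI)

lemma merged_vertex_cases: "x \<in> Vstar \<Longrightarrow> x \<in> M \<or> (\<exists>v\<in>V - \<Union>M. x = {v})"
  unfolding merged_vertices_def by blast

lemma merged_vertex_in_part: "x \<in> Vstar \<Longrightarrow> \<exists>A\<in>P. x \<subseteq> A"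
  using merged_vertex_cases pair_in_part Union_parts by blast

lemma card_merged_vertex: "x \<in> Vstar \<Longrightarrow> card x = (if x \<in> M then 2 else 1)"
  using merged_vertex_cases pair_card by fastforce

lemma merged_vertex_subset: "x \<in> Vstar \<Longrightarrow> x \<subseteq> V"
  using merged_vertex_in_part part_subset by blast

lemma merged_vertices_disjoint: "x \<in> Vstar \<Longrightarrow> y \<in> Vstar \<Longrightarrow> x \<noteq> y \<Longrightarrow> x \<inter> y = {}"
  unfolding merged_vertices_def using pairs_disjoint by blast

lemma finite_merged_vertices: "finite Vstar"
  using finite_V merged_vertex_subset by (meson Pow_iff finite_Pow_iff finite_subset subsetI)

lemma card_merged_vertices: "card Vstar + card M = card V"
proof -
  let ?S = "(\<lambda>v. {v}) ` (V - \<Union>M)"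
  have "card (\<Union>M) = sum card M"
    using pairs_disjoint pair_card card.infinite
    by (intro card_Union_disjoint) (fastforce simp: pairwise_def disjnt_def)+
  also have "\<dots> = 2 * card M" using pair_card by simp
  finally have "card (V - \<Union>M) + 2 * card M = card V"
    using pair_subset finite_V by (metis Sup_le_iff card_Diff_subset card_mono finite_subset le_add_diff_inverse2)
  moreover have "card Vstar = card M + card ?S"
  proof -
    have "Vstar = M \<union> ?S" unfolding merged_vertices_def by blast
    moreover have "M \<inter> ?S = {}" using pair_card by force
    ultimately show ?thesis using finite_M finite_V by (simp add: card_Un_disjoint)
  qed
  moreover have "card ?S = card (V - \<Union>M)" by (simp add: card_image)
  ultimately show ?thesis by simp
qed

lemma merged_vertex_nonempty: "x \<in> Vstar \<Longrightarrow> x \<noteq> {}"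
  using card_merged_vertex[of "{}"] by (auto split: if_splits)

lemma part_star_unique: "x \<in> star A \<Longrightarrow> x \<in> star B \<Longrightarrow> A \<in> P \<Longrightarrow> B \<in> P \<Longrightarrow> A = B"
  unfolding part_star_def using merged_vertex_nonempty parts_disjoint by blast

lemma part_star_cover: "x \<in> Vstar \<Longrightarrow> \<exists>A\<in>P. x \<in> star A"
  using merged_vertex_in_part unfolding part_star_def by blast

lemma card_paired_parts: "card {A \<in> P. \<exists>p\<in>M. p \<subseteq> A} \<le> card M"
proof -
  let ?Q = "{A \<in> P. \<exists>p\<in>M. p \<subseteq> A}"
  define pair where "pair A = (SOME p. p \<in> M \<and> p \<subseteq> A)" for A
  have pair: "pair A \<in> M \<and> pair A \<subseteq> A" if "A \<in> ?Q" for A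
    unfolding pair_def by (rule someI_ex) (use that in blast)
  have "inj_on pair ?Q"
  proof (rule inj_onI)
    fix A B assume A: "A \<in> ?Q" and B: "B \<in> ?Q" and eq: "pair A = pair B"
    have "pair A \<noteq> {}" using pair_card[of "pair A"] pair[OF A] by auto
    moreover have "pair A \<subseteq> A \<inter> B" using pair[OF A] pair[OF B] eq by blast
    moreover have "A \<in> P" "B \<in> P" using A B by auto
    ultimately show "A = B" using parts_disjoint by blast
  qed
  then have "card ?Q = card (pair ` ?Q)" by (simp add: card_image)
  also have "\<dots> \<le> card M" using pair finite_M by (intro card_mono) auto
  finally show ?thesis .
qed

lemma two_in_part_star:
  assumes "A \<in> P" "x \<in> star A" "y \<in> star A" "x \<noteq> y"
  shows "card x + card y \<le> card A"
proof -
  have "x \<in> Vstar" "y \<in> Vstar" "x \<union> y \<subseteq> A" using assms(2,3) unfolding part_star_def by auto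
  then have "card x + card y = card (x \<union> y)"
    using merged_vertices_disjoint[OF _ _ assms(4)] finite_part[OF assms(1)]
    by (metis card_Un_disjoint finite_subset le_supE)
  also have "\<dots> \<le> card A" using \<open>x \<union> y \<subseteq> A\<close> finite_part[OF assms(1)] by (rule card_mono[rotated])
  finally show ?thesis .
qed

lemma card_eq_sum_part_star: "J \<subseteq> Vstar \<Longrightarrow> card J = (\<Sum>A\<in>P. card (J \<inter> star A))"
proof -
  assume J: "J \<subseteq> Vstar"
  have "J = (\<Union>A\<in>P. J \<inter> star A)" using J part_star_cover by blast
  moreover have "card (\<Union>A\<in>P. J \<inter> star A) = (\<Sum>A\<in>P. card (J \<inter> star A))"
    using finite_P J finite_merged_vertices part_star_unique
    by (intro card_UN_disjoint) (auto intro: finite_subset)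
  ultimately show ?thesis by simp
qed

lemma merged_subset_cases:
  assumes J: "J \<subseteq> Vstar"
  obtains (three) A x y z where "A \<in> P" "{x, y, z} \<subseteq> J" "x \<in> star A" "y \<in> star A" "z \<in> star A"
      "x \<noteq> y" "x \<noteq> z" "y \<noteq> z"
    | (merged) "J \<subseteq> M"
    | (spread) v0 where "\<And>A. A \<in> P \<Longrightarrow> card (J \<inter> star A) \<le> 2" "{v0} \<in> J" "v0 \<in> V"
proof (cases "\<exists>A\<in>P. 3 \<le> card (J \<inter> star A)")
  case True
  then obtain A where A: "A \<in> P" "3 \<le> card (J \<inter> star A)" by blast
  from A(2) obtain x y z where xyz: "{x, y, z} \<subseteq> J \<inter> star A" "x \<noteq> y" "x \<noteq> z" "y \<noteq> z"
    by (rule three_subset)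
  show ?thesis by (rule that(1)[OF A(1), of x y z]) (use xyz in auto)
next
  case few: False
  show ?thesis
  proof (cases "J \<subseteq> M")
    case False
    then obtain x where "x \<in> J" "x \<notin> M" by blast
    then obtain v0 where "v0 \<in> V" "x = {v0}" using merged_vertex_cases J by blast
    moreover have "card (J \<inter> star A) \<le> 2" if "A \<in> P" for A
    proof -
      have "\<not> 3 \<le> card (J \<inter> star A)" using few that by blast
      then show ?thesis by simp
    qed
    ultimately show ?thesis using that(3) \<open>x \<in> J\<close> by blast
  qed (rule that(2))
qed

lemma card_merged_vertex_pos: "x \<in> Vstar \<Longrightarrow> 1 \<le> card x"
  using card_merged_vertex by simp

definition doubled_parts :: "'v set set \<Rightarrow> 'v set set" where
  "doubled_parts J = {A \<in> P. card (J \<inter> star A) = 2}"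

lemma card_spread:
  assumes J: "J \<subseteq> Vstar" and le2: "\<And>A. A \<in> P \<Longrightarrow> card (J \<inter> star A) \<le> 2"
  shows "card J \<le> card P + card (doubled_parts J)" "card J \<le> 2 * card P"
proof -
  have "card (J \<inter> star A) \<le> 1 + (if card (J \<inter> star A) = 2 then 1 else 0)" if "A \<in> P" for A
    using le2[OF that] by (cases "card (J \<inter> star A) = 2") auto
  then have "card J \<le> (\<Sum>A\<in>P. 1 + (if card (J \<inter> star A) = 2 then 1 else 0))"
    unfolding card_eq_sum_part_star[OF J] by (rule sum_mono)
  also have "\<dots> = card P + card (doubled_parts J)"
    using finite_P by (simp only: sum.distrib) (simp add: sum.inter_filter[symmetric] doubled_parts_def)
  finally show "card J \<le> card P + card (doubled_parts J)" .
  show "card J \<le> 2 * card P"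
    using sum_bounded_above[of P "\<lambda>A. card (J \<inter> star A)" 2] le2
    by (simp add: card_eq_sum_part_star[OF J] mult.commute)
qed

lemma doubled_partE:
  assumes "A \<in> doubled_parts J"
  obtains x y where "{x, y} \<subseteq> J" "x \<in> star A" "y \<in> star A" "x \<noteq> y"
proof -
  have "card (J \<inter> star A) = 2" using assms by (simp add: doubled_parts_def)
  then obtain x y where "J \<inter> star A = {x, y}" "x \<noteq> y" by (meson card_2_iff)
  then show thesis using that by blast
qed

lemma card_doubled_part:
  assumes "A \<in> doubled_parts J"
  shows "2 \<le> card A"
proof -
  obtain x y where xy: "x \<in> star A" "y \<in> star A" "x \<noteq> y" using assms by (rule doubled_partE)
  have "A \<in> P" using assms by (simp add: doubled_parts_def)
  have x: "x \<in> Vstar" and y: "y \<in> Vstar" using xy by (auto simp: part_star_def)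
  have "1 \<le> card x" by (rule card_merged_vertex_pos[OF x])
  moreover have "1 \<le> card y" by (rule card_merged_vertex_pos[OF y])
  ultimately have "2 \<le> card x + card y" by linarith
  also have "\<dots> \<le> card A" using two_in_part_star[OF \<open>A \<in> P\<close> xy] .
  finally show ?thesis .
qed

end

lemma merged_list_singleton: "merged_list L {v} = L v"
  by (simp add: merged_list_def)

lemma merged_list_subset: "v \<in> x \<Longrightarrow> merged_list L x \<subseteq> L v"
  unfolding merged_list_def by blast

section \<open>The minimal counterexample\<close>

locale minimal_counterexample =
  fixes V :: "'v set" and E :: "'v \<Rightarrow> 'v \<Rightarrow> bool" and P :: "'v set set"
    and L :: "'v \<Rightarrow> 'c set" and k n :: nat
  assumes k_pos: "k \<ge> 1"
    and n_ge: "n \<ge> 2 * k + 2"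
    and G: "complete_multipartite V E P"
    and k_parts: "card P = k"
    and n_def: "card V = n"
    and list_size: "\<forall>v\<in>V. int (card (L v)) \<ge> ceiling ((real n + real k - 1) / 3)"
    and no_col: "\<not> (\<exists>f. L_coloring V E L f)"
    and few_colors: "card (\<Union>v\<in>V. L v) \<le> n - 1"
    and minimal: "\<forall>(W :: nat set) (F :: nat \<Rightarrow> nat \<Rightarrow> bool).
        simple_graph W F \<and> card W < n \<longrightarrow>
        int (choice_number W F) \<le> max (int (chromatic_number W F))
          (ceiling ((real (card W) + real (chromatic_number W F) - 1) / 3))"
begin

sublocale finite_partition V P
  using G unfolding complete_multipartite_def by unfold_locales auto

lemma edge_iff: "E u v \<longleftrightarrow> u \<in> V \<and> v \<in> V \<and> part_of u \<noteq> part_of v"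
proof -
  have "(\<exists>A\<in>P. u \<in> A \<and> v \<in> A) \<longleftrightarrow> part_of u = part_of v" if "u \<in> V" "v \<in> V"
    using part_of[OF that(1)] part_of[OF that(2)] part_unique by blast
  then show ?thesis using G unfolding complete_multipartite_def by blast
qed

definition list_bound :: nat where
  "list_bound = nat \<lceil>(real n + real k - 1) / 3\<rceil>"

lemma int_list_bound: "int list_bound = \<lceil>(real n + real k - 1) / 3\<rceil>"
  unfolding list_bound_def using n_ge by simp

lemma list_bound_le_card: "v \<in> V \<Longrightarrow> list_bound \<le> card (L v)"
  using list_size int_list_bound by fastforce

lemma k_less_list_bound: "k < list_bound"
proof -
  have "real k < (real n + real k - 1) / 3" using n_ge by simp
  then show ?thesis using int_list_bound by linarith
qed

lemma list_card_bound: "v \<in> V \<Longrightarrow> n + k \<le> 3 * card (L v) + 1"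
proof -
  assume "v \<in> V"
  have "(real n + real k - 1) / 3 \<le> real list_bound" using int_list_bound by linarith
  then have "real (n + k) \<le> real (3 * card (L v) + 1)"
    using list_bound_le_card[OF \<open>v \<in> V\<close>] by simp
  then show ?thesis by (simp only: of_nat_le_iff)
qed

lemma finite_list: "v \<in> V \<Longrightarrow> finite (L v)"
  using list_bound_le_card k_less_list_bound card.infinite by fastforce

lemma finite_colors: "finite (\<Union>v\<in>V. L v)"
  using finite_V finite_list by blast

lemma smaller_graph_choosable:
  fixes W :: "nat set" and F :: "nat \<Rightarrow> nat \<Rightarrow> bool"
  assumes W: "simple_graph W F" "card W < n"
    and chi: "chromatic_number W F \<le> k" "card W + chromatic_number W F + 3 \<le> n + k"
  shows "choosable W F (list_bound - 1)"
proof -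
  let ?\<chi> = "chromatic_number W F"
  have "int (choice_number W F) \<le> max (int ?\<chi>) \<lceil>(real (card W) + real ?\<chi> - 1) / 3\<rceil>"
    using minimal W by blast
  moreover have "int ?\<chi> \<le> int list_bound - 1" using chi(1) k_less_list_bound by linarith
  moreover have "\<lceil>(real (card W) + real ?\<chi> - 1) / 3\<rceil> \<le> int list_bound - 1"
  proof -
    have "(real (card W) + real ?\<chi> - 1) / 3 \<le> (real n + real k - 1) / 3 - 1"
      using chi(2) by (simp add: divide_simps)
    then show ?thesis unfolding int_list_bound by (metis ceiling_diff_one ceiling_mono)
  qed
  ultimately have "choice_number W F \<le> list_bound - 1" by linarith
  then show ?thesis using choosable_choice_number[OF W(1)] choosable_mono by blast
qed

lemma chromatic_number_induced_le:
  assumes "V' \<subseteq> V" "inj_on g V'"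
  shows "chromatic_number (g ` V') (image_edges g V' E) \<le> card {B \<in> P. B \<inter> V' \<noteq> {}}"
proof -
  let ?Q = "{B \<in> P. B \<inter> V' \<noteq> {}}"
  have "finite ?Q" using finite_P by simp
  then obtain idx where idx: "bij_betw idx ?Q {0..<card ?Q}" using ex_bij_betw_finite_nat by blast
  have part_of_Q: "part_of v \<in> ?Q" if "v \<in> V'" for v using that assms(1) part_of[of v] by blast
  show ?thesis
  proof (rule chromatic_number_image_edges_le[OF assms(2)])
    show "(idx \<circ> part_of) ` V' \<subseteq> {..<card ?Q}" using idx part_of_Q unfolding bij_betw_def by auto
    show "(idx \<circ> part_of) u \<noteq> (idx \<circ> part_of) v" if "u \<in> V'" "v \<in> V'" "E u v" for u v
    proof -
      have "part_of u \<noteq> part_of v" using that(3) edge_iff by blast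
      moreover have "inj_on idx ?Q" using idx by (rule bij_betw_imp_inj_on)
      ultimately show ?thesis using inj_onD part_of_Q[OF that(1)] part_of_Q[OF that(2)] by fastforce
    qed
  qed
qed

text \<open>Minimality applies to G - T, which has fewer vertices and, if T is a whole part, fewer
  parts; in both cases the bound it gives is one less than the list size of G.\<close>
lemma L_colorable_Diff_part_subset:
  fixes L' :: "'v \<Rightarrow> 'd set"
  assumes A: "A \<in> P" and T: "T \<subseteq> A" "T \<noteq> {}" and big: "3 \<le> card T \<or> (T = A \<and> 2 \<le> card T)"
    and L': "\<And>v. v \<in> V - T \<Longrightarrow> list_bound - 1 \<le> card (L' v)" "finite (\<Union>v\<in>V - T. L' v)"
  shows "\<exists>f. L_coloring (V - T) E L' f"
proof -
  let ?Q = "{B \<in> P. B \<inter> (V - T) \<noteq> {}}"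
  have T_V: "T \<subseteq> V" using A T(1) part_subset by blast
  have fin_T: "finite T" using T_V finite_V by (rule finite_subset)
  obtain g :: "'v \<Rightarrow> nat" where g: "inj_on g (V - T)"
    using finite_imp_inj_to_nat_seg[of "V - T"] finite_V by blast
  let ?W = "g ` (V - T)" and ?F = "image_edges g (V - T) E"
  have card_T: "0 < card T" "card T \<le> n"
    using T(2) fin_T card_mono[OF finite_V T_V] n_def by (auto simp: card_gt_0_iff)
  have "card ?W = card (V - T)" using g by (rule card_image)
  then have card_W: "card ?W = n - card T" using card_Diff_subset[OF fin_T T_V] n_def by simp
  have simple: "simple_graph ?W ?F"
    using finite_V edge_iff by (intro simple_graph_image_edges[OF _ g]) auto
  have chi: "chromatic_number ?W ?F \<le> card ?Q" using g by (intro chromatic_number_induced_le) auto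
  have "card ?Q \<le> k" using finite_P k_parts card_mono[of P ?Q] by auto
  moreover have "card ?Q < k" if "T = A"
  proof -
    have "?Q \<subset> P" using that A by auto
    then show ?thesis using finite_P k_parts psubset_card_mono by blast
  qed
  ultimately have "choosable ?W ?F (list_bound - 1)"
    using big card_W card_T chi by (intro smaller_graph_choosable[OF simple]) linarith+
  then show ?thesis using choosable_image_edges_imp_L_coloring[OF _ g L'] by blast
qed

lemma no_common_color:
  assumes A: "A \<in> P" and T: "T \<subseteq> A" "T \<noteq> {}" and c: "\<And>v. v \<in> T \<Longrightarrow> c \<in> L v"
    and big: "3 \<le> card T \<or> (T = A \<and> 2 \<le> card T)"
  shows False
proof -
  have T_V: "T \<subseteq> V" using A T(1) part_subset by blast
  have "list_bound - 1 \<le> card (L v - {c})" if "v \<in> V - T" for v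
    using list_bound_le_card[of v] that card_Diff_singleton_if[of "L v" c] by auto
  moreover have "finite (\<Union>v\<in>V - T. L v - {c})" using finite_colors by (rule finite_subset[rotated]) auto
  ultimately obtain f where f: "L_coloring (V - T) E (\<lambda>v. L v - {c}) f"
    using L_colorable_Diff_part_subset[OF A T big, where L' = "\<lambda>v. L v - {c}"] by blast
  have "\<not> E u v" if "u \<in> T" "v \<in> T" for u v
  proof -
    have "part_of u = A" "part_of v = A" using that T_V T(1) A part_of part_unique by blast+
    then show ?thesis using edge_iff by simp
  qed
  then have "L_coloring V E L (\<lambda>v. if v \<in> T then c else f v)" using f c by (intro L_coloring_extend)
  then show False using no_col by blast
qed

lemma color_in_at_most_two: "A \<in> P \<Longrightarrow> card {v \<in> A. c \<in> L v} \<le> 2"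
proof (rule ccontr)
  assume A: "A \<in> P" and "\<not> card {v \<in> A. c \<in> L v} \<le> 2"
  then have "3 \<le> card {v \<in> A. c \<in> L v}" by simp
  moreover from this have "{v \<in> A. c \<in> L v} \<noteq> {}" by (intro notI) simp
  ultimately show False using no_common_color[OF A, of "{v \<in> A. c \<in> L v}" c] by blast
qed

lemma lists_disjoint_in_part_of_two:
  assumes A: "A \<in> P" "card A = 2" and uw: "u \<in> A" "w \<in> A" "u \<noteq> w"
  shows "L u \<inter> L w = {}"
proof (rule ccontr)
  assume "L u \<inter> L w \<noteq> {}"
  then obtain c where c: "c \<in> L u" "c \<in> L w" by blast
  have "{u, w} \<subseteq> A" "card {u, w} = card A" using uw A(2) by auto
  then have "A = {u, w}" using card_subset_eq[OF finite_part[OF A(1)]] by blast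
  then show False using no_common_color[OF A(1) subset_refl, of c] c A(2) by auto
qed

lemma sum_card_lists_le: "A \<in> P \<Longrightarrow> (\<Sum>v\<in>A. card (L v)) \<le> 2 * card (\<Union>v\<in>V. L v)"
proof -
  assume A: "A \<in> P"
  let ?C = "\<Union>v\<in>V. L v"
  have "{c \<in> ?C. c \<in> L v} = L v" if "v \<in> A" for v using that part_subset[OF A] by blast
  then have "(\<Sum>v\<in>A. card (L v)) = (\<Sum>v\<in>A. card {c \<in> ?C. c \<in> L v})" by simp
  also have "\<dots> = (\<Sum>c\<in>?C. card {v \<in> A. c \<in> L v})"
    by (rule sum_multicount_gen[OF finite_part[OF A] finite_colors, where k = "\<lambda>c. card {v \<in> A. c \<in> L v}"])
      simp
  also have "\<dots> \<le> (\<Sum>c\<in>?C. 2)" using color_in_at_most_two[OF A] by (intro sum_mono)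
  finally show ?thesis by simp
qed

lemma part_card_mult_le: "A \<in> P \<Longrightarrow> card A * (n + k - 1) \<le> 6 * (n - 1)"
proof -
  assume A: "A \<in> P"
  have "card A * (n + k) = (\<Sum>v\<in>A. n + k)" by simp
  also have "\<dots> \<le> (\<Sum>v\<in>A. 3 * card (L v) + 1)"
    using A part_subset list_card_bound by (intro sum_mono) blast
  also have "\<dots> = 3 * (\<Sum>v\<in>A. card (L v)) + card A" by (simp only: sum.distrib sum_distrib_left) simp
  also have "\<dots> \<le> 6 * (n - 1) + card A" using sum_card_lists_le[OF A] few_colors by linarith
  finally have "card A * (n + k) \<le> 6 * (n - 1) + card A" .
  moreover have "card A * (n + k - 1) = card A * (n + k) - card A" by (simp add: diff_mult_distrib2)
  ultimately show ?thesis by linarith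
qed

lemma part_card_le_5: "A \<in> P \<Longrightarrow> card A \<le> 5"
proof (rule ccontr)
  assume A: "A \<in> P" and "\<not> card A \<le> 5"
  then have "6 * (n + k - 1) \<le> card A * (n + k - 1)" by (intro mult_le_mono1) simp
  also have "\<dots> \<le> 6 * (n - 1)" using part_card_mult_le[OF A] .
  finally show False using k_pos n_ge by linarith
qed

lemma part_card_le_4: "A \<in> P \<Longrightarrow> card A \<le> 4"
proof (rule ccontr)
  assume A: "A \<in> P" and "\<not> card A \<le> 4"
  then have "card A = 5" using part_card_le_5 by fastforce
  then have "5 * (n + k - 1) \<le> 6 * (n - 1)" using part_card_mult_le[OF A] by simp
  moreover have "n \<le> 5 * k" using card_V_le[of 5] part_card_le_5 n_def k_parts by simp
  ultimately show False using n_ge by linarith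
qed

end

section \<open>Hall's condition for the merged lists\<close>

locale good_merging = minimal_counterexample V E P L k n
  for V :: "'v set" and E P and L :: "'v \<Rightarrow> 'c set" and k n +
  fixes M Z3 Z4 :: "'v set set"
  assumes M: "merging P M"
    and Z3: "Z3 \<subseteq> {A \<in> P. card A = 3}" "card Z3 = (2 * num_parts P 3) div 3"
    and Z4: "Z4 \<subseteq> {A \<in> P. card A = 4}"
        "3 * int (card Z4) = max 0 (int (num_parts P 1) - int (num_parts P 3) + int (num_parts P 4) + 1)"
    and P2: "\<forall>A\<in>P. card A = 4 \<longrightarrow> (\<exists>p\<in>M. p \<subseteq> A)"
    and P3: "\<forall>A\<in>P. \<forall>x\<in>part_star V M A. \<forall>y\<in>part_star V M A. \<forall>z\<in>part_star V M A.
        x \<noteq> y \<and> x \<noteq> z \<and> y \<noteq> z \<longrightarrow>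
        int (card (merged_list L x \<union> merged_list L y \<union> merged_list L z))
          \<ge> int n - int (card {A \<in> P. card A = 3 \<and> (\<exists>p\<in>M. p \<subseteq> A)}) - int (num_parts P 4)"
    and P4: "\<forall>A\<in>P. card A = 3 \<and> \<not> (\<exists>p\<in>M. p \<subseteq> A) \<longrightarrow>
        (\<forall>x\<in>part_star V M A. \<forall>y\<in>part_star V M A. x \<noteq> y \<longrightarrow>
          card (merged_list L x \<union> merged_list L y) \<ge> k + num_parts P 3 + num_parts P 4)"
    and P5: "\<forall>A\<in>Z3. \<forall>x\<in>part_star V M A. \<forall>y\<in>part_star V M A. x \<noteq> y \<longrightarrow>
        card (merged_list L x \<union> merged_list L y)
          \<ge> k + card {A \<in> P. card A = 3 \<and> (\<exists>p\<in>M. p \<subseteq> A)} + num_parts P 4"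
    and P6: "\<forall>A\<in>P. card A = 3 \<longrightarrow>
        (\<forall>x\<in>part_star V M A. \<forall>y\<in>part_star V M A. x \<noteq> y \<longrightarrow>
          real (card (merged_list L x \<union> merged_list L y))
            \<ge> real k + real (num_parts P 3) / 3 + real (num_parts P 4))"
    and P7: "\<forall>A\<in>Z4. \<forall>x\<in>part_star V M A. \<forall>y\<in>part_star V M A. x \<noteq> y \<longrightarrow>
        card (merged_list L x \<union> merged_list L y) \<ge> k + num_parts P 4"
    and P8: "has_SDR M (merged_list L)"
begin

sublocale merged_partition V P M
  using M by unfold_locales

lemma merged_list_subset_colors: "x \<in> Vstar \<Longrightarrow> merged_list L x \<subseteq> (\<Union>v\<in>V. L v)"
proof -
  assume x: "x \<in> Vstar"
  from merged_vertex_nonempty[OF x] obtain v where v: "v \<in> x" by auto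
  have "merged_list L x \<subseteq> L v" using v by (rule merged_list_subset)
  moreover have "v \<in> V" using v merged_vertex_subset[OF x] by blast
  ultimately show ?thesis by blast
qed

lemma finite_merged_lists: "J \<subseteq> Vstar \<Longrightarrow> finite (\<Union>(merged_list L ` J))"
proof -
  assume "J \<subseteq> Vstar"
  then have "\<Union>(merged_list L ` J) \<subseteq> (\<Union>v\<in>V. L v)" using merged_list_subset_colors by blast
  then show ?thesis using finite_colors by (rule finite_subset)
qed

lemma card_merged_lists_mono:
  assumes "X \<subseteq> J" "J \<subseteq> Vstar"
  shows "card (\<Union>(merged_list L ` X)) \<le> card (\<Union>(merged_list L ` J))"
  using finite_merged_lists[OF assms(2)] by (rule card_mono) (use assms(1) in blast)

lemma card_paired_triples_and_quads:
  "card {A \<in> P. card A = 3 \<and> (\<exists>p\<in>M. p \<subseteq> A)} + num_parts P 4 \<le> card M"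
proof -
  let ?T3 = "{A \<in> P. card A = 3 \<and> (\<exists>p\<in>M. p \<subseteq> A)}" and ?S4 = "{A \<in> P. card A = 4}"
  have "card ?T3 + card ?S4 = card (?T3 \<union> ?S4)"
    using finite_P by (intro card_Un_disjoint[symmetric]) auto
  also have "\<dots> \<le> card {A \<in> P. \<exists>p\<in>M. p \<subseteq> A}"
    using P2 finite_P by (intro card_mono) auto
  finally show ?thesis using card_paired_parts unfolding num_parts_def by linarith
qed

lemma Z3_complement_bound: "3 * (num_parts P 3 - card Z3) \<le> num_parts P 3 + 2"
  using Z3(2) by linarith

lemma Z4_bound: "3 * (k + num_parts P 4) + 1 \<le> n + k + 3 * card Z4"
proof -
  have "int (num_parts P 1) - int (num_parts P 3) + int (num_parts P 4) + 1 \<le> 3 * int (card Z4)"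
    using Z4(2) by simp
  then have "num_parts P 1 + num_parts P 4 + 1 \<le> 3 * card Z4 + num_parts P 3" by linarith
  then show ?thesis using card_V_lower_bound n_def k_parts by (simp add: distrib_left)
qed

lemma Hall_three_in_part:
  assumes J: "J \<subseteq> Vstar" and A: "A \<in> P" and xyz: "{x, y, z} \<subseteq> J" "x \<in> star A" "y \<in> star A" "z \<in> star A"
    and distinct: "x \<noteq> y" "x \<noteq> z" "y \<noteq> z"
  shows "card J \<le> card (\<Union>(merged_list L ` J))"
proof -
  have "card J \<le> card Vstar" using J finite_merged_vertices by (rule card_mono[rotated])
  then have "int (card J) \<le> int n - int (card {A \<in> P. card A = 3 \<and> (\<exists>p\<in>M. p \<subseteq> A)}) - int (num_parts P 4)"
    using card_merged_vertices card_paired_triples_and_quads n_def by linarith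
  also have "\<dots> \<le> int (card (merged_list L x \<union> merged_list L y \<union> merged_list L z))"
    using P3 A xyz(2-4) distinct by blast
  also have "\<dots> \<le> int (card (\<Union>(merged_list L ` J)))"
    using card_merged_lists_mono[OF xyz(1) J] by (simp add: Un_assoc)
  finally show ?thesis by simp
qed

lemma Hall_merged:
  assumes "J \<subseteq> M"
  shows "card J \<le> card (\<Union>(merged_list L ` J))"
proof -
  obtain f where f: "inj_on f M" "\<forall>p\<in>M. f p \<in> merged_list L p"
    using P8 unfolding has_SDR_def by blast
  have "J \<subseteq> Vstar" using assms by (auto simp: merged_vertices_def)
  have "card J = card (f ` J)" using f(1) assms by (simp add: card_image inj_on_subset)
  also have "\<dots> \<le> card (\<Union>(merged_list L ` J))"
    using f(2) assms finite_merged_lists[OF \<open>J \<subseteq> Vstar\<close>] by (intro card_mono) auto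
  finally show ?thesis .
qed

lemma card_merged_lists_ge_pair:
  assumes J: "J \<subseteq> Vstar" and A: "A \<in> doubled_parts J"
    and b: "\<And>x y. x \<in> star A \<Longrightarrow> y \<in> star A \<Longrightarrow> x \<noteq> y \<Longrightarrow> b \<le> card (merged_list L x \<union> merged_list L y)"
  shows "b \<le> card (\<Union>(merged_list L ` J))"
proof -
  obtain x y where xy: "{x, y} \<subseteq> J" "x \<in> star A" "y \<in> star A" "x \<noteq> y" using A by (rule doubled_partE)
  have "b \<le> card (merged_list L x \<union> merged_list L y)" using b xy(2-4) .
  also have "\<dots> \<le> card (\<Union>(merged_list L ` J))" using card_merged_lists_mono[OF xy(1) J] by simp
  finally show ?thesis .
qed

lemma Hall_spread_part_of_two:
  assumes J: "J \<subseteq> Vstar" "\<And>A. A \<in> P \<Longrightarrow> card (J \<inter> star A) \<le> 2"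
    and A: "A \<in> doubled_parts J" "card A = 2"
  shows "card J \<le> card (\<Union>(merged_list L ` J))"
proof -
  obtain x y where xy: "{x, y} \<subseteq> J" "x \<in> star A" "y \<in> star A" "x \<noteq> y" using A(1) by (rule doubled_partE)
  have "A \<in> P" using A(1) by (simp add: doubled_parts_def)
  have x: "x \<in> Vstar" and y: "y \<in> Vstar" using xy(2,3) by (auto simp: part_star_def)
  have "card x + card y \<le> 2" using two_in_part_star[OF \<open>A \<in> P\<close> xy(2-4)] A(2) by simp
  then have "card x = 1" "card y = 1"
    using card_merged_vertex_pos[OF x] card_merged_vertex_pos[OF y] by linarith+
  then obtain u w where u: "x = {u}" and w: "y = {w}" by (meson card_1_singletonE)
  then have "u \<in> V" "w \<in> V" using merged_vertex_subset x y by blast+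
  have "u \<in> A" "w \<in> A" "u \<noteq> w" using u w xy(2-4) by (auto simp: part_star_def)
  then have "L u \<inter> L w = {}" using lists_disjoint_in_part_of_two \<open>A \<in> P\<close> A(2) by blast
  then have "card (L u) + card (L w) = card (L u \<union> L w)"
    using finite_list \<open>u \<in> V\<close> \<open>w \<in> V\<close> by (simp add: card_Un_disjoint)
  also have "\<dots> \<le> card (\<Union>(merged_list L ` J))"
    using card_merged_lists_mono[OF xy(1) J(1)] u w by (simp add: merged_list_singleton)
  finally have "card (L u) + card (L w) \<le> card (\<Union>(merged_list L ` J))" .
  moreover have "2 * k + 2 \<le> card (L u) + card (L w)"
    using list_bound_le_card[OF \<open>u \<in> V\<close>] list_bound_le_card[OF \<open>w \<in> V\<close>] k_less_list_bound
    by linarith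
  moreover have "card J \<le> 2 * k" using card_spread(2)[OF J] k_parts by simp
  ultimately show ?thesis by linarith
qed

lemma spread_bound_triple_outside_Z3:
  assumes J: "J \<subseteq> Vstar" and sizes: "\<And>A. A \<in> doubled_parts J \<Longrightarrow> card A = 3 \<or> card A = 4"
    and A: "A \<in> doubled_parts J" "card A = 3" and no_Z3: "doubled_parts J \<inter> Z3 = {}"
  shows "k + card (doubled_parts J) \<le> card (\<Union>(merged_list L ` J))"
proof -
  let ?D = "doubled_parts J" and ?S3 = "{A \<in> P. card A = 3}" and ?S4 = "{A \<in> P. card A = 4}"
  have fin: "finite {A \<in> P. Q A}" for Q using finite_P by simp
  have "?D \<subseteq> (?S3 - Z3) \<union> ?S4" using sizes no_Z3 by (auto simp: doubled_parts_def)
  then have "card ?D \<le> card (?S3 - Z3) + card ?S4" using fin by (intro card_le_card_Un) auto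
  also have "card (?S3 - Z3) = num_parts P 3 - card Z3"
    using card_Diff_subset[OF finite_subset[OF Z3(1) fin] Z3(1)] by (simp add: num_parts_def)
  finally have "3 * card ?D \<le> num_parts P 3 + 2 + 3 * num_parts P 4"
    using Z3_complement_bound by (simp add: num_parts_def)
  then have D_bound: "3 * real (card ?D) \<le> real (num_parts P 3) + 2 + 3 * real (num_parts P 4)"
    by linarith
  show ?thesis
  proof (rule card_merged_lists_ge_pair[OF J A(1)])
    fix x y assume "x \<in> star A" "y \<in> star A" "x \<noteq> y"
    then have "real k + real (num_parts P 3) / 3 + real (num_parts P 4)
        \<le> real (card (merged_list L x \<union> merged_list L y))"
      using A P6 by (auto simp: doubled_parts_def)
    then have "real (k + card ?D) < real (card (merged_list L x \<union> merged_list L y)) + 1"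
      using D_bound by simp
    then show "k + card ?D \<le> card (merged_list L x \<union> merged_list L y)" by linarith
  qed
qed

lemma spread_bound_with_triple:
  assumes J: "J \<subseteq> Vstar" and sizes: "\<And>A. A \<in> doubled_parts J \<Longrightarrow> card A = 3 \<or> card A = 4"
    and triple: "\<exists>A\<in>doubled_parts J. card A = 3"
  shows "k + card (doubled_parts J) \<le> card (\<Union>(merged_list L ` J))"
proof -
  let ?D = "doubled_parts J" and ?U = "card (\<Union>(merged_list L ` J))"
  let ?S3 = "{A \<in> P. card A = 3}" and ?S4 = "{A \<in> P. card A = 4}"
    and ?T3 = "{A \<in> P. card A = 3 \<and> (\<exists>p\<in>M. p \<subseteq> A)}"
  have D_P: "?D \<subseteq> P" by (auto simp: doubled_parts_def)
  have fin: "finite {A \<in> P. Q A}" for Q using finite_P by simp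
  show ?thesis
  proof (cases "\<exists>A\<in>?D. card A = 3 \<and> \<not> (\<exists>p\<in>M. p \<subseteq> A)")
    case True
    then obtain A where A: "A \<in> ?D" "card A = 3" "\<not> (\<exists>p\<in>M. p \<subseteq> A)" by blast
    have "card ?D \<le> card ?S3 + card ?S4"
      using D_P sizes by (intro card_le_card_Un[OF fin fin]) blast
    moreover have "k + num_parts P 3 + num_parts P 4 \<le> ?U"
      using A D_P P4 by (intro card_merged_lists_ge_pair[OF J A(1)]) blast
    ultimately show ?thesis by (simp add: num_parts_def)
  next
    case triples_paired: False
    show ?thesis
    proof (cases "?D \<inter> Z3 = {}")
      case False
      then obtain A where A: "A \<in> ?D" "A \<in> Z3" by blast
      have "card ?D \<le> card ?T3 + card ?S4"
        using D_P sizes triples_paired by (intro card_le_card_Un[OF fin fin]) blast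
      moreover have "k + card ?T3 + num_parts P 4 \<le> ?U"
        using A P5 by (intro card_merged_lists_ge_pair[OF J A(1)]) blast
      ultimately show ?thesis by (simp add: num_parts_def)
    next
      case True
      then show ?thesis using spread_bound_triple_outside_Z3[OF J sizes] triple by blast
    qed
  qed
qed

lemma spread_bound_quads:
  assumes J: "J \<subseteq> Vstar" and v0: "{v0} \<in> J" "v0 \<in> V"
    and quads: "\<And>A. A \<in> doubled_parts J \<Longrightarrow> card A = 4"
  shows "k + card (doubled_parts J) \<le> card (\<Union>(merged_list L ` J))"
proof -
  let ?D = "doubled_parts J" and ?U = "card (\<Union>(merged_list L ` J))"
  let ?S4 = "{A \<in> P. card A = 4}"
  have D_S4: "?D \<subseteq> ?S4" using quads by (auto simp: doubled_parts_def)
  have fin: "finite ?S4" using finite_P by simp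
  show ?thesis
  proof (cases "\<exists>A\<in>?D. A \<in> Z4")
    case True
    then obtain A where A: "A \<in> ?D" "A \<in> Z4" by blast
    have "card ?D \<le> num_parts P 4" using card_mono[OF fin D_S4] by (simp add: num_parts_def)
    moreover have "k + num_parts P 4 \<le> ?U"
      using A P7 by (intro card_merged_lists_ge_pair[OF J A(1)]) blast
    ultimately show ?thesis by linarith
  next
    case False
    then have "card ?D \<le> card (?S4 - Z4)" using D_S4 fin by (intro card_mono) auto
    also have "\<dots> = num_parts P 4 - card Z4"
      using card_Diff_subset[OF finite_subset[OF Z4(1) fin] Z4(1)] by (simp add: num_parts_def)
    finally have "3 * k + 3 * card ?D + 1 \<le> n + k"
      using Z4_bound card_mono[OF fin Z4(1)] by (simp add: num_parts_def)
    moreover have "n + k \<le> 3 * card (L v0) + 1" using list_card_bound[OF v0(2)] .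
    moreover have "card (L v0) \<le> ?U"
      using card_merged_lists_mono[of "{{v0}}" J] v0(1) J by (simp add: merged_list_singleton)
    ultimately show ?thesis by linarith
  qed
qed

lemma Hall_spread:
  assumes J: "J \<subseteq> Vstar" "\<And>A. A \<in> P \<Longrightarrow> card (J \<inter> star A) \<le> 2" and v0: "{v0} \<in> J" "v0 \<in> V"
  shows "card J \<le> card (\<Union>(merged_list L ` J))"
proof (cases "\<exists>A\<in>doubled_parts J. card A = 2")
  case True
  then show ?thesis using Hall_spread_part_of_two[OF J] by blast
next
  case False
  have sizes: "card A = 3 \<or> card A = 4" if "A \<in> doubled_parts J" for A
    using that False card_doubled_part[OF that] part_card_le_4[of A]
    by (fastforce simp: doubled_parts_def)
  have "k + card (doubled_parts J) \<le> card (\<Union>(merged_list L ` J))"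
  proof (cases "\<exists>A\<in>doubled_parts J. card A = 3")
    case True
    then show ?thesis using spread_bound_with_triple[OF J(1) sizes] by blast
  next
    case False
    then show ?thesis using spread_bound_quads[OF J(1) v0] sizes by blast
  qed
  moreover have "card J \<le> k + card (doubled_parts J)"
    using card_spread(1)[OF J] k_parts by simp
  ultimately show ?thesis by linarith
qed

lemma Hall_condition:
  assumes J: "J \<subseteq> Vstar"
  shows "card J \<le> card (\<Union>(merged_list L ` J))"
  using J
proof (cases rule: merged_subset_cases)
  case three
  then show ?thesis by (rule Hall_three_in_part[OF J])
next
  case merged
  then show ?thesis by (rule Hall_merged)
next
  case spread
  then show ?thesis by (rule Hall_spread[OF J])
qed

end

theorem lemma18:
  fixes V :: "'v set" and E :: "'v \<Rightarrow> 'v \<Rightarrow> bool" and P :: "'v set set"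
    and L :: "'v \<Rightarrow> 'c set" and k n :: nat
    and Z3 Z4 M :: "'v set set"
  assumes k_pos: "k \<ge> 1"
    and n_ge: "n \<ge> 2 * k + 2"
    and G: "complete_multipartite V E P"
    and k_parts: "card P = k"
    and n_def: "card V = n"
    and list_size: "\<forall>v\<in>V. int (card (L v)) \<ge> ceiling ((real n + real k - 1) / 3)"
    and no_col: "\<not> (\<exists>f. L_coloring V E L f)"
    and few_colors: "card (\<Union>v\<in>V. L v) \<le> n - 1"
    and minimal: "\<forall>(W :: nat set) (F :: nat \<Rightarrow> nat \<Rightarrow> bool).
        simple_graph W F \<and> card W < n \<longrightarrow>
        int (choice_number W F) \<le> max (int (chromatic_number W F))
          (ceiling ((real (card W) + real (chromatic_number W F) - 1) / 3))"
    and Z3: "Z3 \<subseteq> {A \<in> P. card A = 3}" "card Z3 = (2 * num_parts P 3) div 3"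
    and Z4: "Z4 \<subseteq> {A \<in> P. card A = 4}"
        "3 * int (card Z4) = max 0 (int (num_parts P 1) - int (num_parts P 3) + int (num_parts P 4) + 1)"
    and M: "merging P M"
    and P1: "3 * card {A \<in> P. card A = 3 \<and> (\<exists>p\<in>M. p \<subseteq> A)} \<ge> num_parts P 3"
    and P2: "\<forall>A\<in>P. card A = 4 \<longrightarrow> (\<exists>p\<in>M. p \<subseteq> A)"
    and P3: "\<forall>A\<in>P. \<forall>x\<in>part_star V M A. \<forall>y\<in>part_star V M A. \<forall>z\<in>part_star V M A.
        x \<noteq> y \<and> x \<noteq> z \<and> y \<noteq> z \<longrightarrow>
        int (card (merged_list L x \<union> merged_list L y \<union> merged_list L z))
          \<ge> int n - int (card {A \<in> P. card A = 3 \<and> (\<exists>p\<in>M. p \<subseteq> A)}) - int (num_parts P 4)"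
    and P4: "\<forall>A\<in>P. card A = 3 \<and> \<not> (\<exists>p\<in>M. p \<subseteq> A) \<longrightarrow>
        (\<forall>x\<in>part_star V M A. \<forall>y\<in>part_star V M A. x \<noteq> y \<longrightarrow>
          card (merged_list L x \<union> merged_list L y) \<ge> k + num_parts P 3 + num_parts P 4)"
    and P5: "\<forall>A\<in>Z3. \<forall>x\<in>part_star V M A. \<forall>y\<in>part_star V M A. x \<noteq> y \<longrightarrow>
        card (merged_list L x \<union> merged_list L y)
          \<ge> k + card {A \<in> P. card A = 3 \<and> (\<exists>p\<in>M. p \<subseteq> A)} + num_parts P 4"
    and P6: "\<forall>A\<in>P. card A = 3 \<longrightarrow>
        (\<forall>x\<in>part_star V M A. \<forall>y\<in>part_star V M A. x \<noteq> y \<longrightarrow>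
          real (card (merged_list L x \<union> merged_list L y))
            \<ge> real k + real (num_parts P 3) / 3 + real (num_parts P 4))"
    and P7: "\<forall>A\<in>Z4. \<forall>x\<in>part_star V M A. \<forall>y\<in>part_star V M A. x \<noteq> y \<longrightarrow>
        card (merged_list L x \<union> merged_list L y) \<ge> k + num_parts P 4"
    and P8: "has_SDR M (merged_list L)"
  shows "has_SDR (merged_vertices V M) (merged_list L)"
proof -
  interpret good_merging V E P L k n M Z3 Z4
    by unfold_locales (fact assms)+
  show ?thesis
  proof (rule Hall_has_SDR[OF finite_merged_vertices])
    show "finite (merged_list L x)" if "x \<in> merged_vertices V M" for x
      using merged_list_subset_colors[OF that] finite_colors by (rule finite_subset)
    show "card J \<le> card (\<Union>(merged_list L ` J))" if "J \<subseteq> merged_vertices V M" for J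
      using that by (rule Hall_condition)
  qed
qed

end
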